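(* Let $a<b$ be positive integers such that $b$ is not a multiple of $a$, and let $$B=\begin{pmatrix}0&-a&0&b\\1&0&-1&0\\0&a&0&-b\\-1&0&1&0\end{pmatrix}.$$ Then $B$ is skew-symmetrizable with skew-symmetrizer $\operatorname{diag}(1,a,1,b)$ (hence strongly primitive when $\gcd(a,b)=1$), and $B$ does not admit a global unfolding. More precisely, for every unfolding $(C,(e_i),(E_i))$ of $B$, the data $(\mu_2\mu_4(C),(e_i),(E_i))$ is not an unfolding of $\mu_2\mu_4(B)$: the $E_1\times E_3$ block of $\mu_2\mu_4(C)$ contains both a positive and a negative entry.
   Context: An $n\times n$ integer matrix $B$ is skew-symmetrizable if there is $D=\operatorname{diag}(d_1,\dots,d_n)$ with positive integer entries such that $DB$ is skew-symmetric; strongly primitive if such $D$ can be chosen with pairwise coprime $d_i$. Matrix mutation: $\mu_k(B)=B'$ with $b'_{ij}=-b_{ij}$ if $i=k$ or $j=k$, and $b'_{ij}=b_{ij}+\frac{b_{ik}|b_{kj}|+|b_{ik}|b_{kj}}{2}$ otherwise. An unfolding of $B$ is a triple $(C,(e_i)_{i=1}^n,(E_i)_{i=1}^n)$: positive integers $e_i$ with $b_{ij}e_j=-b_{ji}e_i$; disjoint index sets $E_i$ with $|E_i|=e_i$; a skew-symmetric integer matrix $C$ indexed by $\bigcup E_i$, such that (1) the sum of entries in each column of each $E_i\times E_j$ block of $C$ equals $b_{ij}$, and (2) if $b_{ij}\ge0$ then the $E_i\times E_j$ block of $C$ has all entries nonnegative. For an unfolding, the composite mutation $\mu_k=\prod_{\bar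 k\in E_k}\mu_{\bar k}$ of $C$ is well defined (its factors commute). $B$ admits a global unfolding if some unfolding $(C,(e_i),(E_i))$ has the property that for every finite sequence $(k_1,\dots,k_\ell)$ of indices, $(\mu_{k_\ell}\cdots\mu_{k_1}(C),(e_i),(E_i))$ is an unfolding of $\mu_{k_\ell}\cdots\mu_{k_1}(B)$. *)

theory Defs
  imports Main
begin

text \<open>An n x n
  exchange matrix B uses the indices 0..n-1 (the paper's index i corresponds
  to i-1 here).  The unfolded matrix C is indexed by an arbitrary type 'v;
  only its entries on the union of the sets E i matter.\<close>

definition skew_symmetrizer :: "nat \<Rightarrow> (nat \<Rightarrow> nat \<Rightarrow> int) \<Rightarrow> (nat \<Rightarrow> int) \<Rightarrow> bool" where
  "skew_symmetrizer n B d \<longleftrightarrow>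
     (\<forall>i<n. d i > 0) \<and> (\<forall>i<n. \<forall>j<n. d i * B i j = - (d j * B j i))"

definition skew_symmetrizable :: "nat \<Rightarrow> (nat \<Rightarrow> nat \<Rightarrow> int) \<Rightarrow> bool" where
  "skew_symmetrizable n B \<longleftrightarrow> (\<exists>d. skew_symmetrizer n B d)"

definition strongly_primitive :: "nat \<Rightarrow> (nat \<Rightarrow> nat \<Rightarrow> int) \<Rightarrow> bool" where
  "strongly_primitive n B \<longleftrightarrow>
     (\<exists>d. skew_symmetrizer n B d \<and> (\<forall>i<n. \<forall>j<n. i \<noteq> j \<longrightarrow> coprime (d i) (d j)))"

definition mut :: "'i \<Rightarrow> ('i \<Rightarrow> 'i \<Rightarrow> int) \<Rightarrow> ('i \<Rightarrow> 'i \<Rightarrow> int)" where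
  "mut k B = (\<lambda>i j. if i = k \<or> j = k then - B i j
                     else B i j + (B i k * \<bar>B k j\<bar> + \<bar>B i k\<bar> * B k j) div 2)"

text \<open>Mutation sequence: the list [k1,...,kl] means mu_kl ... mu_k1 (k1 applied first).\<close>
definition mut_seq :: "('i \<Rightarrow> 'i \<Rightarrow> int) \<Rightarrow> 'i list \<Rightarrow> ('i \<Rightarrow> 'i \<Rightarrow> int)" where
  "mut_seq B ks = foldl (\<lambda>M k. mut k M) B ks"

definition comp_mut :: "(nat \<Rightarrow> 'v set) \<Rightarrow> nat \<Rightarrow> ('v \<Rightarrow> 'v \<Rightarrow> int) \<Rightarrow> ('v \<Rightarrow> 'v \<Rightarrow> int)" where
  "comp_mut E k C = Finite_Set.fold mut C (E k)"

definition comp_mut_seq :: "(nat \<Rightarrow> 'v set) \<Rightarrow> ('v \<Rightarrow> 'v \<Rightarrow> int) \<Rightarrow> nat list \<Rightarrow> ('v \<Rightarrow> 'v \<Rightarrow> int)" where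
  "comp_mut_seq E C ks = foldl (\<lambda>M k. comp_mut E k M) C ks"

definition is_unfolding ::
  "nat \<Rightarrow> (nat \<Rightarrow> nat \<Rightarrow> int) \<Rightarrow> ('v \<Rightarrow> 'v \<Rightarrow> int) \<Rightarrow> (nat \<Rightarrow> nat) \<Rightarrow> (nat \<Rightarrow> 'v set) \<Rightarrow> bool" where
  "is_unfolding n B C e E \<longleftrightarrow>
     (\<forall>i<n. e i > 0) \<and>
     (\<forall>i<n. \<forall>j<n. B i j * int (e j) = - (B j i * int (e i))) \<and>
     (\<forall>i<n. finite (E i) \<and> card (E i) = e i) \<and>
     (\<forall>i<n. \<forall>j<n. i \<noteq> j \<longrightarrow> E i \<inter> E j = {}) \<and>
     (\<forall>x\<in>(\<Union>i<n. E i). \<forall>y\<in>(\<Union>i<n. E i). C x y = - C y x) \<and>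
     (\<forall>i<n. \<forall>j<n. \<forall>y\<in>E j. (\<Sum>x\<in>E i. C x y) = B i j) \<and>
     (\<forall>i<n. \<forall>j<n. B i j \<ge> 0 \<longrightarrow> (\<forall>x\<in>E i. \<forall>y\<in>E j. C x y \<ge> 0))"

definition is_global_unfolding ::
  "nat \<Rightarrow> (nat \<Rightarrow> nat \<Rightarrow> int) \<Rightarrow> ('v \<Rightarrow> 'v \<Rightarrow> int) \<Rightarrow> (nat \<Rightarrow> nat) \<Rightarrow> (nat \<Rightarrow> 'v set) \<Rightarrow> bool" where
  "is_global_unfolding n B C e E \<longleftrightarrow>
     is_unfolding n B C e E \<and>
     (\<forall>ks. set ks \<subseteq> {..<n} \<longrightarrow>
        is_unfolding n (mut_seq B ks) (comp_mut_seq E C ks) e E)"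

definition Bmat :: "int \<Rightarrow> int \<Rightarrow> nat \<Rightarrow> nat \<Rightarrow> int" where
  "Bmat a b i j = (if i < 4 \<and> j < 4 then
      [[0, -a, 0, b], [1, 0, -1, 0], [0, a, 0, -b], [-1, 0, 1, 0]] ! i ! j else 0)"

definition dex :: "int \<Rightarrow> int \<Rightarrow> nat \<Rightarrow> int" where
  "dex a b i = (if i < 4 then [1, a, 1, b] ! i else 0)"

end

theory Submission
  imports Defs
begin

text \<open>Column sums and sign conditions force every vertex of \<open>E 0\<close> to have exactly one
  neighbour in \<open>E 3\<close> (arrow weight \<open>1\<close>) and one in \<open>E 1\<close> (weight \<open>-1\<close>), and likewise
  for the vertices of \<open>E 2\<close>.  Mutating at \<open>E 3\<close> and then at \<open>E 1\<close> is sign-coherent along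
  all paths \<open>E 0 \<rightarrow> E 3 \<rightarrow> E 2\<close> and \<open>E 0 \<rightarrow> E 1 \<rightarrow> E 2\<close>, so the new entry at
  \<open>(i, j)\<close> is \<open>C x j + C y j\<close>, where \<open>x\<close> and \<open>y\<close> are the two neighbours of \<open>i\<close>.
  Summing over \<open>j\<close> gives \<open>b - a > 0\<close>, so some entry is positive.  If none were negative,
  vertices of \<open>E 0\<close> with the same neighbour in \<open>E 1\<close> would have the same neighbour in
  \<open>E 3\<close>; as these fibres have sizes \<open>a\<close> and \<open>b\<close>, \<open>a\<close> would divide \<open>b\<close>.\<close>

text \<open>For a set \<open>S\<close> of pairwise unconnected vertices this is the composite mutation at \<open>S\<close>
  (lemma \<open>fold_mut_eq_mut_at_set\<close>).\<close>
definition mut_at_set :: "'v set \<Rightarrow> ('v \<Rightarrow> 'v \<Rightarrow> int) \<Rightarrow> 'v \<Rightarrow> 'v \<Rightarrow> int" where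
  "mut_at_set S C = (\<lambda>i j. if i \<in> S \<or> j \<in> S then - C i j
     else C i j + (\<Sum>x\<in>S. (C i x * \<bar>C x j\<bar> + \<bar>C i x\<bar> * C x j) div 2))"

lemma mut_at_set_empty [simp]: "mut_at_set {} C = C"
  by (simp add: mut_at_set_def)

lemma mut_mut_at_set:
  assumes "finite A" "x \<notin> A" and indep: "\<forall>u\<in>insert x A. \<forall>w\<in>insert x A. C u w = 0"
  shows "mut x (mut_at_set A C) = mut_at_set (insert x A) C"
proof (intro ext)
  fix i j
  let ?M = "mut_at_set A C"
  have Cx: "C x w = 0" "C w x = 0" if "w \<in> insert x A" for w
    using indep that by auto
  have Mix: "?M i x = (if i \<in> A then 0 else C i x)" if "i \<noteq> x" for i
    using that assms(2) Cx by (auto simp: mut_at_set_def)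
  have Mxj: "?M x j = (if j \<in> A then 0 else C x j)" if "j \<noteq> x" for j
    using that assms(2) Cx by (auto simp: mut_at_set_def)
  show "mut x ?M i j = mut_at_set (insert x A) C i j"
  proof (cases "i = x \<or> j = x")
    case True
    then show ?thesis
      using assms(2) Cx by (auto simp: mut_def mut_at_set_def)
  next
    case False
    then show ?thesis
      using Mix[of i] Mxj[of j] assms(1,2) by (auto simp: mut_def mut_at_set_def)
  qed
qed

lemma fold_graph_mut_eq_mut_at_set:
  assumes "fold_graph mut C A M" "A \<subseteq> S" "\<forall>u\<in>S. \<forall>w\<in>S. C u w = 0"
  shows "M = mut_at_set A C"
  using assms(1,2)
proof (induction rule: fold_graph.induct)
  case (insertI x A M)
  have "finite A"
    using insertI.hyps(2) by induction simp_all
  with insertI assms(3) show ?case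
    by (simp add: mut_mut_at_set subset_eq)
qed simp

lemma fold_mut_eq_mut_at_set:
  assumes "finite S" "\<forall>u\<in>S. \<forall>w\<in>S. C u w = 0"
  shows "Finite_Set.fold mut C S = mut_at_set S C"
proof -
  have unique: "M = mut_at_set S C" if "fold_graph mut C S M" for M
    using that assms by (intro fold_graph_mut_eq_mut_at_set) auto
  obtain M where "fold_graph mut C S M"
    using finite_imp_fold_graph[OF assms(1), of mut C] by blast
  with unique have "(THE M. fold_graph mut C S M) = mut_at_set S C"
    by (metis the_equality)
  with assms(1) show ?thesis
    by (simp add: Finite_Set.fold_def)
qed

lemma mut_at_set_unchanged:
  assumes "i \<notin> S" "j \<notin> S" "\<And>x. x \<in> S \<Longrightarrow> C i x = 0 \<or> C x j = 0"
  shows "mut_at_set S C i j = C i j"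
proof -
  have "(C i x * \<bar>C x j\<bar> + \<bar>C i x\<bar> * C x j) div 2 = 0" if "x \<in> S" for x
    using assms(3)[OF that] by auto
  with assms(1,2) show ?thesis
    by (simp add: mut_at_set_def)
qed

lemma mut_at_set_nonneg_path:
  assumes "i \<notin> S" "j \<notin> S" "\<And>x. x \<in> S \<Longrightarrow> 0 \<le> C i x \<and> 0 \<le> C x j"
  shows "mut_at_set S C i j = C i j + (\<Sum>x\<in>S. C i x * C x j)"
  using assms by (auto simp: mut_at_set_def intro!: sum.cong)

lemma mut_at_set_nonpos_path:
  assumes "i \<notin> S" "j \<notin> S" "\<And>x. x \<in> S \<Longrightarrow> C i x \<le> 0 \<and> C x j \<le> 0"
  shows "mut_at_set S C i j = C i j - (\<Sum>x\<in>S. C i x * C x j)"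
proof -
  have "(C i x * \<bar>C x j\<bar> + \<bar>C i x\<bar> * C x j) div 2 = - (C i x * C x j)" if "x \<in> S" for x
    using assms(3)[OF that] by auto
  with assms(1,2) show ?thesis
    by (simp add: mut_at_set_def sum_negf)
qed

lemma nonneg_sum_eq_1_imp_indicator:
  fixes f :: "'a \<Rightarrow> int"
  assumes "finite S" "\<And>s. s \<in> S \<Longrightarrow> 0 \<le> f s" "sum f S = 1"
  shows "\<exists>s\<in>S. \<forall>t\<in>S. f t = of_bool (t = s)"
proof -
  obtain s where s: "s \<in> S" "0 < f s"
    using assms(3) sum_nonpos[of S f] by (metis not_le zero_less_one)
  have "f s + sum f (S - {s}) = 1"
    using assms(1,3) s(1) by (simp add: sum.remove)
  moreover have "0 \<le> sum f (S - {s})"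
    using assms(2) by (meson DiffD1 sum_nonneg)
  ultimately have "f s = 1" "sum f (S - {s}) = 0"
    using s(2) by linarith+
  then have "\<forall>t\<in>S. f t = of_bool (t = s)"
    using assms(1,2) sum_nonneg_eq_0_iff[of "S - {s}" f] by auto
  with s(1) show ?thesis
    by blast
qed

lemma dvd_card_of_saturated:
  assumes "finite S" "A \<subseteq> S"
    and saturated: "\<And>i i'. i \<in> A \<Longrightarrow> i' \<in> S \<Longrightarrow> f i' = f i \<Longrightarrow> i' \<in> A"
    and fibres: "\<And>i. i \<in> S \<Longrightarrow> card {i' \<in> S. f i' = f i} = k"
  shows "k dvd card A"
proof -
  have A: "A = (\<Union>y\<in>f ` A. {i \<in> S. f i = y})"
    using assms(2) saturated by auto
  have "card A = (\<Sum>y\<in>f ` A. card {i \<in> S. f i = y})"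
    using assms(1,2) by (subst A, intro card_UN_disjoint) (auto intro: finite_subset)
  also have "\<dots> = (\<Sum>y\<in>f ` A. k)"
    using assms(2) fibres by (intro sum.cong) auto
  also have "\<dots> = card (f ` A) * k"
    by simp
  finally show ?thesis
    by simp
qed

lemma unfolding_finite:
  "is_unfolding n B C e E \<Longrightarrow> i < n \<Longrightarrow> finite (E i)"
  unfolding is_unfolding_def by blast

lemma unfolding_nonempty:
  "is_unfolding n B C e E \<Longrightarrow> i < n \<Longrightarrow> E i \<noteq> {}"
  unfolding is_unfolding_def by (metis card.empty less_irrefl)

lemma unfolding_disjoint:
  "is_unfolding n B C e E \<Longrightarrow> i < n \<Longrightarrow> j < n \<Longrightarrow> i \<noteq> j \<Longrightarrow> E i \<inter> E j = {}"
  unfolding is_unfolding_def by blast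

lemma unfolding_skew:
  "is_unfolding n B C e E \<Longrightarrow> i < n \<Longrightarrow> j < n \<Longrightarrow> x \<in> E i \<Longrightarrow> y \<in> E j \<Longrightarrow> C x y = - C y x"
  unfolding is_unfolding_def by blast

lemma unfolding_column_sum:
  "is_unfolding n B C e E \<Longrightarrow> i < n \<Longrightarrow> j < n \<Longrightarrow> y \<in> E j \<Longrightarrow> (\<Sum>x\<in>E i. C x y) = B i j"
  unfolding is_unfolding_def by blast

lemma unfolding_row_sum:
  assumes "is_unfolding n B C e E" "i < n" "j < n" "x \<in> E i"
  shows "(\<Sum>y\<in>E j. C x y) = - B j i"
proof -
  have "(\<Sum>y\<in>E j. C x y) = - (\<Sum>y\<in>E j. C y x)"
    using unfolding_skew[OF assms(1,2,3) assms(4)] by (simp add: sum_negf)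
  with unfolding_column_sum[OF assms(1,3,2,4)] show ?thesis
    by simp
qed

lemma unfolding_nonneg:
  "is_unfolding n B C e E \<Longrightarrow> i < n \<Longrightarrow> j < n \<Longrightarrow> 0 \<le> B i j \<Longrightarrow> x \<in> E i \<Longrightarrow> y \<in> E j \<Longrightarrow> 0 \<le> C x y"
  unfolding is_unfolding_def by blast

lemma unfolding_nonpos:
  assumes "is_unfolding n B C e E" "i < n" "j < n" "0 \<le> B j i" "x \<in> E i" "y \<in> E j"
  shows "C x y \<le> 0"
  using unfolding_nonneg[OF assms(1,3,2,4,6,5)] unfolding_skew[OF assms(1,2,3,5,6)] by simp

lemma unfolding_zero:
  assumes "is_unfolding n B C e E" "i < n" "j < n" "0 \<le> B i j" "0 \<le> B j i" "x \<in> E i" "y \<in> E j"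
  shows "C x y = 0"
  using unfolding_nonneg[OF assms(1-4,6,7)] unfolding_nonpos[OF assms(1-3,5-7)] by simp

lemma unfolding_column_indicator:
  assumes "is_unfolding n B C e E" "i < n" "j < n" "B i j = 1" "y \<in> E j"
  shows "\<exists>s\<in>E i. \<forall>t\<in>E i. C t y = of_bool (t = s)"
  using assms by (intro nonneg_sum_eq_1_imp_indicator)
    (auto intro: unfolding_finite unfolding_nonneg simp: unfolding_column_sum)

lemma unfolding_column_neg_indicator:
  assumes "is_unfolding n B C e E" "i < n" "j < n" "B i j = -1" "0 \<le> B j i" "y \<in> E j"
  shows "\<exists>s\<in>E i. \<forall>t\<in>E i. C t y = - of_bool (t = s)"
proof -
  have "\<exists>s\<in>E i. \<forall>t\<in>E i. - C t y = of_bool (t = s)"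
    using assms by (intro nonneg_sum_eq_1_imp_indicator)
      (auto intro: unfolding_finite dest: unfolding_nonpos simp: sum_negf unfolding_column_sum)
  then show ?thesis
    by (metis minus_minus)
qed

lemma Bmat_skew_symmetrizer:
  "0 < a \<Longrightarrow> 0 < b \<Longrightarrow> skew_symmetrizer 4 (Bmat a b) (dex a b)"
  by (simp add: skew_symmetrizer_def Bmat_def dex_def All_less_Suc numeral_eq_Suc)

lemma Bmat_strongly_primitive:
  assumes "0 < a" "0 < b" "coprime a b"
  shows "strongly_primitive 4 (Bmat a b)"
proof -
  have "\<forall>i<4. \<forall>j<4. i \<noteq> j \<longrightarrow> coprime (dex a b i) (dex a b j)"
    using assms(3) by (simp add: dex_def All_less_Suc numeral_eq_Suc coprime_commute)
  with Bmat_skew_symmetrizer[OF assms(1,2)] show ?thesis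
    unfolding strongly_primitive_def by blast
qed

lemma mut_seq_Bmat: "0 < a \<Longrightarrow> a < b \<Longrightarrow> mut_seq (Bmat a b) [3, 1] 0 2 = b - a"
  by (simp add: mut_seq_def mut_def Bmat_def)

locale Bmat_unfolding =
  fixes a b :: int and C :: "'v \<Rightarrow> 'v \<Rightarrow> int" and e :: "nat \<Rightarrow> nat" and E :: "nat \<Rightarrow> 'v set"
  assumes a_pos: "0 < a" and a_less_b: "a < b"
    and C_unfolds_B: "is_unfolding 4 (Bmat a b) C e E"
begin

lemma finite_E: "i < 4 \<Longrightarrow> finite (E i)"
  using unfolding_finite[OF C_unfolds_B] .

lemma zero_blocks:
  "u \<in> E 3 \<Longrightarrow> w \<in> E 3 \<Longrightarrow> C u w = 0"
  "u \<in> E 1 \<Longrightarrow> w \<in> E 1 \<Longrightarrow> C u w = 0"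
  "u \<in> E 1 \<Longrightarrow> w \<in> E 3 \<Longrightarrow> C u w = 0"
  "u \<in> E 3 \<Longrightarrow> w \<in> E 1 \<Longrightarrow> C u w = 0"
  "u \<in> E 0 \<Longrightarrow> w \<in> E 2 \<Longrightarrow> C u w = 0"
  by (auto intro: unfolding_zero[OF C_unfolds_B, of 3 3] unfolding_zero[OF C_unfolds_B, of 1 1]
    unfolding_zero[OF C_unfolds_B, of 1 3] unfolding_zero[OF C_unfolds_B, of 3 1]
    unfolding_zero[OF C_unfolds_B, of 0 2] simp: Bmat_def)

lemma disjoint_E:
  "E 0 \<inter> E 1 = {}" "E 0 \<inter> E 3 = {}" "E 2 \<inter> E 1 = {}" "E 2 \<inter> E 3 = {}" "E 1 \<inter> E 3 = {}"
  by (simp_all add: unfolding_disjoint[OF C_unfolds_B])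

definition nbr3 :: "'v \<Rightarrow> 'v" where
  "nbr3 i = (THE x. x \<in> E 3 \<and> C i x = 1)"

definition nbr1 :: "'v \<Rightarrow> 'v" where
  "nbr1 i = (THE y. y \<in> E 1 \<and> C i y = -1)"

lemma nbr3:
  assumes "i \<in> E 0"
  shows "nbr3 i \<in> E 3" "\<And>t. t \<in> E 3 \<Longrightarrow> C i t = of_bool (t = nbr3 i)"
proof -
  have "\<exists>x\<in>E 3. \<forall>t\<in>E 3. C t i = - of_bool (t = x)"
    by (rule unfolding_column_neg_indicator[OF C_unfolds_B])
      (use assms a_pos a_less_b in \<open>simp_all add: Bmat_def\<close>)
  then obtain x where x: "x \<in> E 3" "\<And>t. t \<in> E 3 \<Longrightarrow> C t i = - of_bool (t = x)"
    by blast
  have row: "C i t = of_bool (t = x)" if "t \<in> E 3" for t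
    using unfolding_skew[OF C_unfolds_B, of 0 3 i t] x(2)[OF that] assms that by simp
  have "nbr3 i = x"
    unfolding nbr3_def by (rule the_equality) (use x(1) row in auto)
  with x(1) row show "nbr3 i \<in> E 3" "\<And>t. t \<in> E 3 \<Longrightarrow> C i t = of_bool (t = nbr3 i)"
    by simp_all
qed

lemma nbr1:
  assumes "i \<in> E 0"
  shows "nbr1 i \<in> E 1" "\<And>t. t \<in> E 1 \<Longrightarrow> C i t = - of_bool (t = nbr1 i)"
proof -
  have "\<exists>y\<in>E 1. \<forall>t\<in>E 1. C t i = of_bool (t = y)"
    by (rule unfolding_column_indicator[OF C_unfolds_B]) (use assms in \<open>simp_all add: Bmat_def\<close>)
  then obtain y where y: "y \<in> E 1" "\<And>t. t \<in> E 1 \<Longrightarrow> C t i = of_bool (t = y)"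
    by blast
  have row: "C i t = - of_bool (t = y)" if "t \<in> E 1" for t
    using unfolding_skew[OF C_unfolds_B, of 0 1 i t] y(2)[OF that] assms that by simp
  have "nbr1 i = y"
    unfolding nbr1_def by (rule the_equality) (use y(1) row in auto)
  with y(1) row show "nbr1 i \<in> E 1" "\<And>t. t \<in> E 1 \<Longrightarrow> C i t = - of_bool (t = nbr1 i)"
    by simp_all
qed

lemma card_nbr3_fibre:
  assumes "x \<in> E 3"
  shows "int (card {i \<in> E 0. nbr3 i = x}) = b"
proof -
  have "b = (\<Sum>i\<in>E 0. C i x)"
    using unfolding_column_sum[OF C_unfolds_B, of 0 3 x] assms by (simp add: Bmat_def)
  also have "\<dots> = (\<Sum>i\<in>E 0. of_bool (x = nbr3 i))"
    using nbr3(2) assms by (intro sum.cong) auto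
  also have "\<dots> = int (card (E 0 \<inter> {i. x = nbr3 i}))"
    using finite_E[of 0] by simp
  also have "E 0 \<inter> {i. x = nbr3 i} = {i \<in> E 0. nbr3 i = x}"
    by blast
  finally show ?thesis ..
qed

lemma card_nbr1_fibre:
  assumes "y \<in> E 1"
  shows "int (card {i \<in> E 0. nbr1 i = y}) = a"
proof -
  have "a = (\<Sum>i\<in>E 0. - C i y)"
    using unfolding_column_sum[OF C_unfolds_B, of 0 1 y] assms by (simp add: Bmat_def sum_negf)
  also have "\<dots> = (\<Sum>i\<in>E 0. of_bool (y = nbr1 i))"
    using nbr1(2) assms by (intro sum.cong) auto
  also have "\<dots> = int (card (E 0 \<inter> {i. y = nbr1 i}))"
    using finite_E[of 0] by simp
  also have "E 0 \<inter> {i. y = nbr1 i} = {i \<in> E 0. nbr1 i = y}"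
    by blast
  finally show ?thesis ..
qed

lemma mut_E3_unchanged:
  assumes "u \<notin> E 3" "w \<notin> E 3" "u \<in> E 1 \<or> w \<in> E 1"
  shows "mut_at_set (E 3) C u w = C u w"
proof (rule mut_at_set_unchanged[OF assms(1,2)])
  show "C u x = 0 \<or> C x w = 0" if "x \<in> E 3" for x
    using that assms(3) zero_blocks(3,4) by blast
qed

lemma comp_mut_seq_eq: "comp_mut_seq E C [3, 1] = mut_at_set (E 1) (mut_at_set (E 3) C)"
proof -
  have "mut_at_set (E 3) C u w = 0" if "u \<in> E 1" "w \<in> E 1" for u w
  proof -
    have "u \<notin> E 3" "w \<notin> E 3"
      using that disjoint_E(5) by auto
    with that show ?thesis
      using mut_E3_unchanged zero_blocks(2) by simp
  qed
  then show ?thesis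
    using fold_mut_eq_mut_at_set[of "E 3" C] fold_mut_eq_mut_at_set[of "E 1" "mut_at_set (E 3) C"]
      finite_E[of 3] finite_E[of 1] zero_blocks(1)
    by (simp add: comp_mut_seq_def comp_mut_def)
qed

lemma mutated_entry:
  assumes i: "i \<in> E 0" and j: "j \<in> E 2"
  shows "comp_mut_seq E C [3, 1] i j = C (nbr3 i) j + C (nbr1 i) j"
proof -
  define C1 where "C1 = mut_at_set (E 3) C"
  have notin: "i \<notin> E 1" "i \<notin> E 3" "j \<notin> E 1" "j \<notin> E 3"
    using i j disjoint_E by auto
  have C1_near_E1: "C1 i y = C i y" "C1 y j = C y j" if "y \<in> E 1" for y
  proof -
    have "y \<notin> E 3"
      using that disjoint_E(5) by auto
    then show "C1 i y = C i y" "C1 y j = C y j"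
      using that notin mut_E3_unchanged unfolding C1_def by simp_all
  qed
  have path3: "0 \<le> C i x \<and> 0 \<le> C x j" if "x \<in> E 3" for x
    using nbr3(2)[OF i that] unfolding_nonneg[OF C_unfolds_B, of 3 2 x j] that j
    by (simp add: Bmat_def)
  have "C1 i j = C i j + (\<Sum>x\<in>E 3. C i x * C x j)"
    unfolding C1_def using notin(2,4) path3 by (rule mut_at_set_nonneg_path)
  also have "\<dots> = C (nbr3 i) j"
    using zero_blocks(5)[OF i j] nbr3[OF i] finite_E[of 3] by (simp add: sum.delta')
  finally have C1_ij: "C1 i j = C (nbr3 i) j" .
  have path1: "C1 i y \<le> 0 \<and> C1 y j \<le> 0" if "y \<in> E 1" for y
    using C1_near_E1[OF that] nbr1(2)[OF i that] a_pos
      unfolding_nonpos[OF C_unfolds_B, of 1 2 y j] that j by (simp add: Bmat_def)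
  have "comp_mut_seq E C [3, 1] i j = C1 i j - (\<Sum>y\<in>E 1. C1 i y * C1 y j)"
    unfolding comp_mut_seq_eq C1_def[symmetric] using notin(1,3) path1
    by (rule mut_at_set_nonpos_path)
  also have "\<dots> = C (nbr3 i) j + C (nbr1 i) j"
    using C1_ij C1_near_E1 nbr1[OF i] finite_E[of 1] by (simp add: sum_negf)
  finally show ?thesis .
qed

lemma exists_positive_entry: "\<exists>i\<in>E 0. \<exists>j\<in>E 2. 0 < comp_mut_seq E C [3, 1] i j"
proof -
  obtain i where i: "i \<in> E 0"
    using unfolding_nonempty[OF C_unfolds_B, of 0] by auto
  have "(\<Sum>j\<in>E 2. C (nbr3 i) j + C (nbr1 i) j) = b - a"
    using unfolding_row_sum[OF C_unfolds_B, of 3 2 "nbr3 i"] nbr3(1)[OF i]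
      unfolding_row_sum[OF C_unfolds_B, of 1 2 "nbr1 i"] nbr1(1)[OF i]
    by (simp add: sum.distrib Bmat_def)
  then obtain j where "j \<in> E 2" "0 < C (nbr3 i) j + C (nbr1 i) j"
    using a_less_b sum_nonpos[of "E 2" "\<lambda>j. C (nbr3 i) j + C (nbr1 i) j"]
    by (metis diff_gt_0_iff_gt not_le)
  with i show ?thesis
    using mutated_entry by auto
qed

lemma nbr3_eq_if_nbr1_eq:
  assumes nonneg: "\<forall>i\<in>E 0. \<forall>j\<in>E 2. 0 \<le> comp_mut_seq E C [3, 1] i j"
    and i: "i \<in> E 0" and i': "i' \<in> E 0" and same: "nbr1 i' = nbr1 i"
  shows "nbr3 i' = nbr3 i"
proof -
  let ?y = "nbr1 i"
  have y: "?y \<in> E 1"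
    using nbr1(1)[OF i] .
  have "(\<Sum>j\<in>E 2. C ?y j) = - a"
    using unfolding_row_sum[OF C_unfolds_B, of 1 2 ?y] y by (simp add: Bmat_def)
  then obtain j where j: "j \<in> E 2" "C ?y j < 0"
    using a_pos sum_nonneg[of "E 2" "C ?y"] by (metis neg_less_0_iff_less not_le)
  obtain r where "\<forall>t\<in>E 1. C t j = - of_bool (t = r)"
    using unfolding_column_neg_indicator[OF C_unfolds_B, of 1 2 j] j(1) a_pos
    by (auto simp: Bmat_def)
  with j(2) y have y_j: "C ?y j = -1"
    by (cases "?y = r") auto
  obtain s where s: "\<forall>t\<in>E 3. C t j = of_bool (t = s)"
    using unfolding_column_indicator[OF C_unfolds_B, of 3 2 j] j(1) by (auto simp: Bmat_def)
  have "nbr3 k = s" if "k \<in> E 0" "nbr1 k = ?y" for k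
  proof -
    have "0 \<le> C (nbr3 k) j + C (nbr1 k) j"
      using nonneg mutated_entry[OF that(1) j(1)] that(1) j(1) by fastforce
    then have "0 < C (nbr3 k) j"
      using y_j that(2) by simp
    then show ?thesis
      using s nbr3(1)[OF that(1)] by (cases "nbr3 k = s") auto
  qed
  then show ?thesis
    using i i' same by metis
qed

lemma exists_negative_entry:
  assumes "\<not> a dvd b"
  shows "\<exists>i\<in>E 0. \<exists>j\<in>E 2. comp_mut_seq E C [3, 1] i j < 0"
proof (rule ccontr)
  assume "\<not> ?thesis"
  then have nonneg: "\<forall>i\<in>E 0. \<forall>j\<in>E 2. 0 \<le> comp_mut_seq E C [3, 1] i j"
    by (simp add: not_less)
  obtain i0 where i0: "i0 \<in> E 0"
    using unfolding_nonempty[OF C_unfolds_B, of 0] by auto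
  let ?A = "{i \<in> E 0. nbr3 i = nbr3 i0}"
  have "nat a dvd card ?A"
  proof (rule dvd_card_of_saturated[where f = nbr1])
    show "finite (E 0)"
      using finite_E by simp
    show "?A \<subseteq> E 0"
      by blast
    show "i' \<in> ?A" if "i \<in> ?A" "i' \<in> E 0" "nbr1 i' = nbr1 i" for i i'
      using nbr3_eq_if_nbr1_eq[OF nonneg, of i i'] that by simp
    show "card {i' \<in> E 0. nbr1 i' = nbr1 i} = nat a" if "i \<in> E 0" for i
      using card_nbr1_fibre[OF nbr1(1)[OF that]] by simp
  qed
  then have "int (nat a) dvd int (card ?A)"
    by (simp only: int_dvd_int_iff)
  moreover have "int (nat a) = a"
    using a_pos by simp
  ultimately have "a dvd b"
    using card_nbr3_fibre[OF nbr3(1)[OF i0]] by simp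
  with assms show False ..
qed

lemma mutated_not_unfolding:
  assumes "\<not> a dvd b"
  shows "\<not> is_unfolding 4 (mut_seq (Bmat a b) [3, 1]) (comp_mut_seq E C [3, 1]) e E"
proof
  assume mutated: "is_unfolding 4 (mut_seq (Bmat a b) [3, 1]) (comp_mut_seq E C [3, 1]) e E"
  have "0 \<le> comp_mut_seq E C [3, 1] i j" if "i \<in> E 0" "j \<in> E 2" for i j
    using unfolding_nonneg[OF mutated, of 0 2 i j] that mut_seq_Bmat a_pos a_less_b by simp
  with exists_negative_entry[OF assms] show False
    by (meson not_less)
qed

end

theorem mainTheorem19:
  fixes a b :: int
  assumes "0 < a" and "a < b" and "\<not> a dvd b"
  shows "skew_symmetrizable 4 (Bmat a b) \<and> skew_symmetrizer 4 (Bmat a b) (dex a b)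
    \<and> (gcd a b = 1 \<longrightarrow> strongly_primitive 4 (Bmat a b))
    \<and> (\<forall>(C :: 'v \<Rightarrow> 'v \<Rightarrow> int) e E. \<not> is_global_unfolding 4 (Bmat a b) C e E)
    \<and> (\<forall>(C :: 'v \<Rightarrow> 'v \<Rightarrow> int) e E. is_unfolding 4 (Bmat a b) C e E \<longrightarrow>
         \<not> is_unfolding 4 (mut_seq (Bmat a b) [3, 1]) (comp_mut_seq E C [3, 1]) e E
         \<and> (\<exists>x\<in>E 0. \<exists>y\<in>E 2. comp_mut_seq E C [3, 1] x y > 0)
         \<and> (\<exists>x\<in>E 0. \<exists>y\<in>E 2. comp_mut_seq E C [3, 1] x y < 0))"
proof -
  have b_pos: "0 < b"
    using assms(1,2) by simp
  have mutation: "\<not> is_unfolding 4 (mut_seq (Bmat a b) [3, 1]) (comp_mut_seq E C [3, 1]) e E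
      \<and> (\<exists>x\<in>E 0. \<exists>y\<in>E 2. comp_mut_seq E C [3, 1] x y > 0)
      \<and> (\<exists>x\<in>E 0. \<exists>y\<in>E 2. comp_mut_seq E C [3, 1] x y < 0)"
    if "is_unfolding 4 (Bmat a b) C e E" for C :: "'v \<Rightarrow> 'v \<Rightarrow> int" and e E
  proof -
    interpret Bmat_unfolding a b C e E
      using assms(1,2) that by unfold_locales
    show ?thesis
      using mutated_not_unfolding[OF assms(3)] exists_positive_entry
        exists_negative_entry[OF assms(3)] by blast
  qed
  have "\<not> is_global_unfolding 4 (Bmat a b) C e E" for C :: "'v \<Rightarrow> 'v \<Rightarrow> int" and e E
  proof
    assume "is_global_unfolding 4 (Bmat a b) C e E"
    moreover have "set [3, 1] \<subseteq> {..<4::nat}"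
      by auto
    ultimately show False
      using mutation unfolding is_global_unfolding_def by blast
  qed
  then show ?thesis
    using Bmat_skew_symmetrizer[OF assms(1) b_pos] Bmat_strongly_primitive[OF assms(1) b_pos]
      mutation
    unfolding skew_symmetrizable_def by (auto simp: coprime_iff_gcd_eq_1)
qed

end
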